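(* Let $\hat q,\hat p$ be $n\times n$ parametric matrices and $M$ an $n\times n$ $(\hat q,\hat p)$-Manin matrix over $\mathfrak R$ which is invertible and such that $\mathrm{cdet}_{\hat q}(M)$ is invertible in $\mathfrak R$. Then for all $1\le i,j\le n$, $$(M^{-1})_{ij}=\varepsilon(\hat p,i^c\oplus i)^{-1}\,\varepsilon(\hat q,j^c\oplus j)\,\mathrm{cdet}_{\hat q}(M)^{-1}\,\mathrm{cdet}_{\hat q}(M_{j^c i^c}),$$ where for $a\in\{1,\dots,n\}$, $a^c$ denotes the increasing multi-index $(1,\dots,\hat a,\dots,n)$ obtained by deleting $a$, and $a^c\oplus a=(1,\dots,\hat a,\dots,n,a)$.
   Context: $\mathfrak R$ is an associative unital algebra over $\mathbb C$. A parametric $n\times n$ matrix is a matrix $\hat q=(q_{ij})$ of nonzero complex numbers with $q_{ij}q_{ji}=1$, $q_{ii}=1$. An $n\times n$ matrix $M$ over $\mathfrak R$ is a $(\hat q,\hat p)$-Manin matrix if $M_{ik}M_{jk}=q_{ji}M_{jk}M_{ik}$ for $i<j$ and all $k$, and $M_{ik}M_{jl}-q_{ji}p_{kl}M_{jl}M_{ik}+p_{kl}M_{il}M_{jk}-q_{ji}M_{jk}M_{il}=0$ for $i<j$, $k<l$. For a multi-index $I=(i_1,\dots,i_r)$, $\varepsilon(\hat q,I)=0$ if two entries coincide, otherwise $\varepsilon(\hat q,I)=\prod_{s<t,\ i_s>i_t}(-q_{i_si_t})$. For increasing $I=(i_1<\dots<i_r)$ and $\sigma\in S_r$, $\varepsilon(\hat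 q,I,\sigma)=\prod_{s<t,\ \sigma(s)>\sigma(t)}(-q_{i_{\sigma(s)}i_{\sigma(t)}})$. For increasing $I$ and any multi-index $J=(j_1,\dots,j_r)$, $\mathrm{cdet}_{\hat q}(M_{IJ})=\sum_{\sigma\in S_r}\varepsilon(\hat q,I,\sigma)M_{i_{\sigma(1)},j_1}\cdots M_{i_{\sigma(r)},j_r}$; $\mathrm{cdet}_{\hat q}(M)$ is the case $I=J=(1,\dots,n)$. *)

theory Defs
  imports Complex_Main "HOL-Combinatorics.Permutations"
begin

text \<open>An associative unital algebra over the complex numbers is encoded as a ring
  (type class ring_1) together with a unital ring homomorphism from the complex
  numbers into its centre (the structure map).  Matrices are functions
  nat => nat => 'a, with indices ranging over 1..n.\<close>

definition complex_algebra_map :: "(complex \<Rightarrow> 'a::ring_1) \<Rightarrow> bool" where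
  "complex_algebra_map emb \<longleftrightarrow>
     (\<forall>x y. emb (x + y) = emb x + emb y) \<and>
     (\<forall>x y. emb (x * y) = emb x * emb y) \<and>
     emb 1 = 1 \<and>
     (\<forall>x r. emb x * r = r * emb x)"

definition param_matrix :: "nat \<Rightarrow> (nat \<Rightarrow> nat \<Rightarrow> complex) \<Rightarrow> bool" where
  "param_matrix n q \<longleftrightarrow>
     (\<forall>i\<in>{1..n}. \<forall>j\<in>{1..n}. q i j \<noteq> 0 \<and> q i j * q j i = 1) \<and>
     (\<forall>i\<in>{1..n}. q i i = 1)"

definition manin :: "(complex \<Rightarrow> 'a::ring_1) \<Rightarrow> nat \<Rightarrow> (nat \<Rightarrow> nat \<Rightarrow> complex)
    \<Rightarrow> (nat \<Rightarrow> nat \<Rightarrow> complex) \<Rightarrow> (nat \<Rightarrow> nat \<Rightarrow> 'a) \<Rightarrow> bool" where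
  "manin emb n q p M \<longleftrightarrow>
     (\<forall>i\<in>{1..n}. \<forall>j\<in>{1..n}. \<forall>k\<in>{1..n}. i < j \<longrightarrow>
        M i k * M j k = emb (q j i) * M j k * M i k) \<and>
     (\<forall>i\<in>{1..n}. \<forall>j\<in>{1..n}. \<forall>k\<in>{1..n}. \<forall>l\<in>{1..n}. i < j \<longrightarrow> k < l \<longrightarrow>
        M i k * M j l - emb (q j i * p k l) * M j l * M i k
          + emb (p k l) * M i l * M j k - emb (q j i) * M j k * M i l = 0)"

definition eps :: "(nat \<Rightarrow> nat \<Rightarrow> complex) \<Rightarrow> nat list \<Rightarrow> complex" where
  "eps q I = (if distinct I then
     (\<Prod>(s,t)\<in>{(s,t). s < t \<and> t < length I \<and> I!s > I!t}. - q (I!s) (I!t))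
   else 0)"

text \<open>epsilon(q, I, sigma) for increasing I and sigma a permutation of the positions.\<close>
definition eps_perm :: "(nat \<Rightarrow> nat \<Rightarrow> complex) \<Rightarrow> nat list \<Rightarrow> (nat \<Rightarrow> nat) \<Rightarrow> complex" where
  "eps_perm q I \<sigma> =
     (\<Prod>(s,t)\<in>{(s,t). s < t \<and> t < length I \<and> \<sigma> s > \<sigma> t}. - q (I!(\<sigma> s)) (I!(\<sigma> t)))"

text \<open>Column determinant cdet_q(M_{IJ}) for increasing I and arbitrary J of the same length.\<close>
definition cdet :: "(complex \<Rightarrow> 'a::ring_1) \<Rightarrow> (nat \<Rightarrow> nat \<Rightarrow> complex) \<Rightarrow> (nat \<Rightarrow> nat \<Rightarrow> 'a)
    \<Rightarrow> nat list \<Rightarrow> nat list \<Rightarrow> 'a" where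
  "cdet emb q M I J =
     (\<Sum>\<sigma>\<in>{\<sigma>. \<sigma> permutes {..<length I}}.
        emb (eps_perm q I \<sigma>) * (\<Prod>s\<leftarrow>[0..<length I]. M (I!(\<sigma> s)) (J!s)))"

definition compl_idx :: "nat \<Rightarrow> nat \<Rightarrow> nat list" where
  "compl_idx n a = filter (\<lambda>x. x \<noteq> a) [1..<Suc n]"

definition inverse_mat :: "nat \<Rightarrow> (nat \<Rightarrow> nat \<Rightarrow> 'a::ring_1) \<Rightarrow> (nat \<Rightarrow> nat \<Rightarrow> 'a) \<Rightarrow> bool" where
  "inverse_mat n M N \<longleftrightarrow>
     (\<forall>i\<in>{1..n}. \<forall>j\<in>{1..n}.
        (\<Sum>k=1..n. M i k * N k j) = (if i = j then 1 else 0) \<and>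
        (\<Sum>k=1..n. N i k * M k j) = (if i = j then 1 else 0))"

end

theory Submission
  imports Defs "HOL-Combinatorics.Multiset_Permutations"
begin

text \<open>Expanding the column determinant along its first column makes it a function of a
  \<^emph>\<open>set\<close> of rows and a list of columns, and in this form Laplace expansion along the last
  column is a plain induction.  The Manin relations say that a 2x2 column minor vanishes
  when its two columns agree and picks up the factor \<open>-p l k\<close> when they are swapped;
  expanding along the first two columns, the same holds for adjacent columns of every
  column determinant.  Hence a column determinant with a repeated column vanishes, and
  moving column \<open>i\<close> of \<open>M\<close> to the end multiplies \<open>cdet M\<close> by \<open>eps(p, i\<^sup>c @ [i])\<close>.  Laplace
  expansion of the column determinant with columns \<open>i\<^sup>c @ [j]\<close> therefore shows that the
  q-adjugate is a left inverse of \<open>M\<close> up to the factor \<open>cdet M\<close>, and multiplying by the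
  inverse \<open>N\<close> from the right gives the formula.\<close>

lemma sum_distinct_pairs_symmetrize:
  fixes H :: "'i::linorder \<Rightarrow> 'i \<Rightarrow> 'b::comm_monoid_add"
  assumes "finite S"
  shows "(\<Sum>x\<in>S. \<Sum>y\<in>S - {x}. H x y) = (\<Sum>(x, y)\<in>{(x, y)\<in>S \<times> S. x < y}. H x y + H y x)"
proof -
  let ?P = "{(x, y)\<in>S \<times> S. x < y}"
  have fin: "finite ?P"
    using assms by (auto intro: finite_subset[of _ "S \<times> S"])
  have "(\<Sum>x\<in>S. \<Sum>y\<in>S - {x}. H x y) = (\<Sum>(x, y)\<in>?P \<union> prod.swap ` ?P. H x y)"
    using assms by (simp add: sum.Sigma) (rule sum.cong; auto)
  also have "\<dots> = (\<Sum>(x, y)\<in>?P. H x y) + (\<Sum>(x, y)\<in>prod.swap ` ?P. H x y)"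
    by (rule sum.union_disjoint) (use fin in auto)
  also have "(\<Sum>(x, y)\<in>prod.swap ` ?P. H x y) = (\<Sum>(x, y)\<in>?P. H y x)"
    by (subst sum.reindex) (auto simp: inj_on_def)
  finally show ?thesis
    by (simp add: sum.distrib split_def)
qed

lemma sum_swap_distinct_pairs:
  fixes F :: "'i \<Rightarrow> 'i \<Rightarrow> 'b::comm_monoid_add"
  assumes "finite S"
  shows "(\<Sum>x\<in>S. \<Sum>k\<in>S - {x}. F x k) = (\<Sum>k\<in>S. \<Sum>x\<in>S - {k}. F x k)"
  using sum.swap_restrict[OF assms assms, of F "\<lambda>x k. k \<noteq> x"]
  by (simp add: set_diff_eq conj_commute eq_commute)

lemma right_inverse_eq_scaled_left_adjugate:
  fixes A M N :: "'i \<Rightarrow> 'i \<Rightarrow> 'a::ring_1"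
  assumes fin: "finite K"
    and adj: "\<And>i j. i \<in> K \<Longrightarrow> j \<in> K \<Longrightarrow>
      (\<Sum>k\<in>K. A i k * M k j) = (if i = j then c else 0)"
    and dc: "d * c = 1"
    and inv: "\<And>i j. i \<in> K \<Longrightarrow> j \<in> K \<Longrightarrow>
      (\<Sum>k\<in>K. M i k * N k j) = (if i = j then 1 else 0)"
    and i: "i \<in> K" and j: "j \<in> K"
  shows "N i j = d * A i j"
proof -
  have "N i j = (\<Sum>k\<in>K. (if i = k then 1 else 0) * N k j)"
    using fin i by (simp add: if_distrib[where f = "\<lambda>x. x * _"] sum.delta cong: if_cong)
  also have "\<dots> = (\<Sum>k\<in>K. d * (\<Sum>l\<in>K. A i l * M l k) * N k j)"
    using adj[OF i] dc by (intro sum.cong) auto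
  also have "\<dots> = d * (\<Sum>l\<in>K. A i l * (\<Sum>k\<in>K. M l k * N k j))"
    by (simp add: sum_distrib_left sum_distrib_right mult.assoc) (rule sum.swap)
  also have "\<dots> = d * (\<Sum>l\<in>K. A i l * (if l = j then 1 else 0))"
    using inv[OF _ j] by (intro arg_cong[where f = "(*) d"] sum.cong) simp_all
  also have "\<dots> = d * A i j"
    using fin j by (simp add: if_distrib[where f = "\<lambda>x. _ * x"] sum.delta' cong: if_cong)
  finally show ?thesis .
qed

lemma eps_Nil [simp]: "eps q [] = 1"
  by (simp add: eps_def)

definition inversions :: "nat list \<Rightarrow> (nat \<times> nat) set" where
  "inversions L = {(s, t). s < t \<and> t < length L \<and> L ! s > L ! t}"

lemma finite_inversions: "finite (inversions L)"
  by (rule finite_subset[of _ "{..<length L} \<times> {..<length L}"]) (auto simp: inversions_def)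

lemma eps_eq_prod_inversions:
  "distinct L \<Longrightarrow> eps q L = (\<Prod>(s, t)\<in>inversions L. - q (L ! s) (L ! t))"
  by (simp add: eps_def inversions_def)

lemma inversions_Cons:
  "inversions (x # ys) =
     (\<lambda>t. (0, Suc t)) ` {t. t < length ys \<and> ys ! t < x} \<union> map_prod Suc Suc ` inversions ys"
proof (rule set_eqI, rule iffI)
  fix st assume "st \<in> inversions (x # ys)"
  then obtain s t where st: "st = (s, t)" "s < t" "t < Suc (length ys)" "(x # ys) ! s > (x # ys) ! t"
    by (auto simp: inversions_def)
  moreover from st obtain t' where "t = Suc t'"
    by (cases t) auto
  ultimately show "st \<in> (\<lambda>t. (0, Suc t)) ` {t. t < length ys \<and> ys ! t < x} \<union> map_prod Suc Suc ` inversions ys"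
    by (cases s) (force simp: inversions_def)+
qed (auto simp: inversions_def)

text \<open>The factors by which \<open>eps\<close> changes when \<open>x\<close> is put in front of an enumeration of
  \<open>S\<close> (\<open>lead_sign\<close>), or \<open>k\<close> behind the increasing enumeration of \<open>S\<close> (\<open>last_sign\<close>).\<close>

definition lead_sign :: "(nat \<Rightarrow> nat \<Rightarrow> complex) \<Rightarrow> nat \<Rightarrow> nat set \<Rightarrow> complex" where
  "lead_sign q x S = (\<Prod>z\<in>{z\<in>S. z < x}. - q x z)"

definition last_sign :: "(nat \<Rightarrow> nat \<Rightarrow> complex) \<Rightarrow> nat \<Rightarrow> nat set \<Rightarrow> complex" where
  "last_sign q k S = (\<Prod>z\<in>{z\<in>S. k < z}. - q z k)"

lemma eps_Cons:
  assumes "distinct (x # ys)"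
  shows "eps q (x # ys) = lead_sign q x (set ys) * eps q ys"
proof -
  let ?g = "\<lambda>(s, t). - q ((x # ys) ! s) ((x # ys) ! t)"
  let ?A = "{t. t < length ys \<and> ys ! t < x}"
  have "prod ?g ((\<lambda>t. (0, Suc t)) ` ?A) = (\<Prod>t\<in>?A. - q x (ys ! t))"
    by (subst prod.reindex) (auto simp: inj_on_def)
  also have "\<dots> = (\<Prod>z\<in>(!) ys ` ?A. - q x z)"
    using assms by (subst prod.reindex) (auto simp: inj_on_def nth_eq_iff_index_eq)
  also have "(!) ys ` ?A = {z\<in>set ys. z < x}"
    by (auto simp: in_set_conv_nth)
  finally have head: "prod ?g ((\<lambda>t. (0, Suc t)) ` ?A) = lead_sign q x (set ys)"
    unfolding lead_sign_def .
  have tail: "prod ?g (map_prod Suc Suc ` inversions ys) = eps q ys"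
    using assms by (subst prod.reindex) (auto simp: inj_on_def eps_eq_prod_inversions split_def)
  have "eps q (x # ys) = prod ?g ((\<lambda>t. (0, Suc t)) ` ?A \<union> map_prod Suc Suc ` inversions ys)"
    using assms by (simp only: eps_eq_prod_inversions inversions_Cons)
  also have "\<dots> = prod ?g ((\<lambda>t. (0, Suc t)) ` ?A) * prod ?g (map_prod Suc Suc ` inversions ys)"
    by (rule prod.union_disjoint) (auto simp: finite_inversions)
  finally show ?thesis
    unfolding head tail .
qed

lemma eps_sorted_snoc:
  "sorted_wrt (<) A \<Longrightarrow> x \<notin> set A \<Longrightarrow> eps q (A @ [x]) = last_sign q x (set A)"
proof (induction A)
  case Nil
  then show ?case
    using eps_Cons[of x "[]" q] by (simp add: lead_sign_def last_sign_def)
next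
  case (Cons a A)
  have gt: "\<forall>z\<in>set A. a < z"
    using Cons.prems by simp
  then have "distinct (a # A @ [x])"
    using Cons.prems strict_sorted_iff[of A] by auto
  then have "eps q ((a # A) @ [x]) = lead_sign q a (insert x (set A)) * last_sign q x (set A)"
    using eps_Cons[of a "A @ [x]" q] Cons by simp
  also have "lead_sign q a (insert x (set A)) = (if x < a then - q a x else 1)"
  proof -
    have "{z\<in>insert x (set A). z < a} = (if x < a then {x} else {})"
      using gt by auto
    then show ?thesis unfolding lead_sign_def by simp
  qed
  also have "last_sign q x (set (a # A)) = (if x < a then - q a x else 1) * last_sign q x (set A)"
  proof -
    have "{z\<in>set (a # A). x < z} = (if x < a then insert a {z\<in>set A. x < z} else {z\<in>set A. x < z})"
      by auto
    moreover have "a \<notin> set A"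
      using gt by auto
    ultimately show ?thesis
      unfolding last_sign_def by simp
  qed
  finally show ?case by simp
qed

lemma lead_sign_Diff_not_less: "\<not> y < x \<Longrightarrow> lead_sign q x (S - {y}) = lead_sign q x S"
  unfolding lead_sign_def by (rule prod.cong) auto

lemma lead_sign_Diff_less:
  assumes "finite S" "x \<in> S" "x < y"
  shows "lead_sign q y S = - q y x * lead_sign q y (S - {x})"
proof -
  have "{z\<in>S. z < y} = insert x {z\<in>S - {x}. z < y}"
    using assms by auto
  then show ?thesis
    unfolding lead_sign_def using assms by simp
qed

lemma last_sign_Diff_not_less: "\<not> k < x \<Longrightarrow> last_sign q k (S - {x}) = last_sign q k S"
  unfolding last_sign_def by (rule prod.cong) auto

lemma last_sign_Diff_less:
  assumes "finite S" "x \<in> S" "k < x"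
  shows "last_sign q k S = - q x k * last_sign q k (S - {x})"
proof -
  have "{z\<in>S. k < z} = insert x {z\<in>S - {x}. k < z}"
    using assms by auto
  then show ?thesis
    unfolding last_sign_def using assms by simp
qed

lemma lead_sign_pair:
  assumes "finite S" "x \<in> S" "y \<in> S" "x < y"
  shows "lead_sign q y S * lead_sign q x (S - {y}) = - q y x * (lead_sign q x S * lead_sign q y (S - {x}))"
  using assms by (simp add: lead_sign_Diff_not_less lead_sign_Diff_less[of S x y q])

lemma lead_sign_last_sign_commute:
  assumes "finite S" "x \<in> S" "k \<in> S" "x \<noteq> k"
  shows "lead_sign q x S * last_sign q k (S - {x}) = last_sign q k S * lead_sign q x (S - {k})"
proof (cases "x < k")
  case True
  then show ?thesis by (simp add: lead_sign_Diff_not_less last_sign_Diff_not_less)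
next
  case False
  with assms have "k < x" by simp
  with assms show ?thesis
    by (simp add: lead_sign_Diff_less[of S k x q] last_sign_Diff_less[of S x k q]
        lead_sign_Diff_not_less last_sign_Diff_not_less)
qed

lemma sorted_nth_less_iff:
  fixes I :: "'a::linorder list"
  assumes "sorted_wrt (<) I" "a < length I" "b < length I"
  shows "I ! a < I ! b \<longleftrightarrow> a < b"
proof
  show "a < b" if "I ! a < I ! b"
  proof (rule ccontr)
    assume "\<not> a < b"
    then have "b < a \<or> b = a" by auto
    then show False
      using that assms sorted_wrt_nth_less[of "(<)" I b a] by auto
  qed
qed (use assms sorted_wrt_nth_less in blast)

lemma eps_perm_eq_eps_permute_list:
  assumes sorted: "sorted_wrt (<) I" and \<sigma>: "\<sigma> permutes {..<length I}"
  shows "eps_perm q I \<sigma> = eps q (permute_list \<sigma> I)"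
proof -
  have in_range: "\<sigma> s < length I" if "s < length I" for s
    using permutes_in_image[OF \<sigma>] that by simp
  have "inversions (permute_list \<sigma> I) = {(s, t). s < t \<and> t < length I \<and> \<sigma> s > \<sigma> t}"
    using sorted_nth_less_iff[OF sorted] in_range
    by (auto simp: inversions_def permute_list_nth[OF \<sigma>])
  moreover have "distinct (permute_list \<sigma> I)"
    using sorted \<sigma> by (simp add: strict_sorted_iff)
  ultimately show ?thesis
    unfolding eps_perm_def
    by (auto simp: eps_eq_prod_inversions permute_list_nth[OF \<sigma>] intro!: prod.cong)
qed

lemma bij_betw_permute_list:
  assumes "distinct I"
  shows "bij_betw (\<lambda>\<sigma>. permute_list \<sigma> I) {\<sigma>. \<sigma> permutes {..<length I}} (permutations_of_set (set I))"
proof (rule bij_betw_imageI)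
  show "inj_on (\<lambda>\<sigma>. permute_list \<sigma> I) {\<sigma>. \<sigma> permutes {..<length I}}"
  proof (rule inj_onI, rule ext)
    fix \<sigma> \<tau> s
    assume \<sigma>: "\<sigma> \<in> {\<sigma>. \<sigma> permutes {..<length I}}" and \<tau>: "\<tau> \<in> {\<sigma>. \<sigma> permutes {..<length I}}"
      and eq: "permute_list \<sigma> I = permute_list \<tau> I"
    show "\<sigma> s = \<tau> s"
    proof (cases "s < length I")
      case True
      then have "I ! \<sigma> s = I ! \<tau> s"
        using arg_cong[OF eq, of "\<lambda>L. L ! s"] \<sigma> \<tau> by (simp add: permute_list_nth)
      then show ?thesis
        using assms True \<sigma> \<tau> permutes_in_image[of _ "{..<length I}" s]
        by (simp add: nth_eq_iff_index_eq)
    next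
      case False
      then show ?thesis
        using \<sigma> \<tau> permutes_not_in[of \<sigma> "{..<length I}" s] permutes_not_in[of \<tau> "{..<length I}" s]
        by simp
    qed
  qed
  show "(\<lambda>\<sigma>. permute_list \<sigma> I) ` {\<sigma>. \<sigma> permutes {..<length I}} = permutations_of_set (set I)"
  proof (rule set_eqI, rule iffI)
    fix xs assume "xs \<in> permutations_of_set (set I)"
    then have "mset xs = mset I"
      using assms set_eq_iff_mset_eq_distinct permutations_of_setD by metis
    then obtain \<sigma> where "\<sigma> permutes {..<length I}" "permute_list \<sigma> I = xs"
      by (rule mset_eq_permutation)
    then show "xs \<in> (\<lambda>\<sigma>. permute_list \<sigma> I) ` {\<sigma>. \<sigma> permutes {..<length I}}"
      by blast
  qed (use assms in \<open>auto simp: permutations_of_set_def\<close>)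
qed

lemma set_compl_idx: "set (compl_idx n i) = {1..n} - {i}"
  unfolding compl_idx_def by auto

lemma sorted_compl_idx: "sorted_wrt (<) (compl_idx n i)"
  unfolding compl_idx_def by (rule sorted_wrt_filter) (rule sorted_wrt_upt)

lemma length_compl_idx:
  assumes "i \<in> {1..n}"
  shows "length (compl_idx n i) = n - 1"
proof -
  have "distinct (compl_idx n i)"
    using sorted_compl_idx strict_sorted_iff by blast
  then show ?thesis
    using assms by (simp add: distinct_card[symmetric] set_compl_idx)
qed

lemma upt_split_at:
  assumes "i \<in> {1..n}"
  shows "[1..<Suc n] = [1..<i] @ i # [Suc i..<Suc n]"
  using assms upt_add_eq_append[of 1 i "Suc n - i"] by (auto simp: upt_conv_Cons)

lemma compl_idx_eq_append:
  assumes "i \<in> {1..n}"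
  shows "compl_idx n i = [1..<i] @ [Suc i..<Suc n]"
  unfolding compl_idx_def upt_split_at[OF assms] by (auto intro: filter_True)

lemma eps_compl_idx_snoc: "eps q (compl_idx n i @ [i]) = last_sign q i {1..n}"
  by (simp add: eps_sorted_snoc sorted_compl_idx set_compl_idx last_sign_Diff_not_less)

text \<open>The column determinant with row set \<open>S\<close>, expanded along its first column; indexing the
  rows by a set rather than a list is what makes induction on the columns work.\<close>

primrec cdet_set :: "(complex \<Rightarrow> 'a::ring_1) \<Rightarrow> (nat \<Rightarrow> nat \<Rightarrow> complex) \<Rightarrow> (nat \<Rightarrow> nat \<Rightarrow> 'a)
    \<Rightarrow> nat set \<Rightarrow> nat list \<Rightarrow> 'a" where
  "cdet_set emb q M S [] = 1"
| "cdet_set emb q M S (j # J) =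
     (\<Sum>x\<in>S. emb (lead_sign q x S) * M x j * cdet_set emb q M (S - {x}) J)"

locale complex_algebra =
  fixes emb :: "complex \<Rightarrow> 'a::ring_1"
  assumes complex_algebra_map: "complex_algebra_map emb"
begin

lemma emb_add: "emb (x + y) = emb x + emb y"
  using complex_algebra_map unfolding complex_algebra_map_def by blast

lemma emb_mult: "emb (x * y) = emb x * emb y"
  using complex_algebra_map unfolding complex_algebra_map_def by blast

lemma emb_1 [simp]: "emb 1 = 1"
  using complex_algebra_map unfolding complex_algebra_map_def by blast

lemma emb_commute: "emb x * r = r * emb x"
  using complex_algebra_map unfolding complex_algebra_map_def by blast

lemma emb_0 [simp]: "emb 0 = 0"
  using emb_add[of 0 0] by simp

lemma emb_minus: "emb (- x) = - emb x"
  using emb_add[of x "- x"] by (metis add.right_inverse emb_0 minus_unique)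

lemma emb_left_commute: "emb x * (r * s) = r * (emb x * s)"
  by (metis emb_commute mult.assoc)

lemma emb_mult_interchange: "emb x * r * (emb y * s) = emb (x * y) * (r * s)"
  by (metis emb_left_commute emb_mult mult.assoc)

lemma emb_mult_interchange_right: "emb x * r * (emb y * s * t) = emb (x * y) * (r * s) * t"
  by (metis emb_mult_interchange mult.assoc)

lemma emb_inverse_mult: "x \<noteq> 0 \<Longrightarrow> emb (inverse x) * emb x = 1"
  by (metis emb_mult emb_1 left_inverse)

lemma cdet_set_eq_sum_permutations:
  "finite S \<Longrightarrow> card S = length J \<Longrightarrow>
     cdet_set emb q M S J = (\<Sum>xs\<in>permutations_of_set S. emb (eps q xs) * prod_list (map2 M xs J))"
proof (induction J arbitrary: S)
  case Nil
  then show ?case by simp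
next
  case (Cons j J)
  let ?t = "\<lambda>xs J. emb (eps q xs) * prod_list (map2 M xs J)"
  have ne: "S \<noteq> {}"
    using Cons.prems by auto
  have "(\<Sum>xs\<in>permutations_of_set S. ?t xs (j # J)) =
      (\<Sum>x\<in>S. \<Sum>xs\<in>(\<lambda>xs. x # xs) ` permutations_of_set (S - {x}). ?t xs (j # J))"
    unfolding permutations_of_set_nonempty[OF ne]
    by (intro sum.UNION_disjoint) (use Cons.prems in auto)
  also have "\<dots> = (\<Sum>x\<in>S. \<Sum>ys\<in>permutations_of_set (S - {x}). ?t (x # ys) (j # J))"
    by (simp add: sum.reindex)
  also have "\<dots> = (\<Sum>x\<in>S. emb (lead_sign q x S) * M x j * cdet_set emb q M (S - {x}) J)"
  proof (rule sum.cong[OF refl])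
    fix x assume x: "x \<in> S"
    have "?t (x # ys) (j # J) = emb (lead_sign q x S) * M x j * ?t ys J"
      if "ys \<in> permutations_of_set (S - {x})" for ys
      using that eps_Cons[of x ys q]
      by (simp add: permutations_of_set_def lead_sign_Diff_not_less flip: emb_mult_interchange)
    moreover have "(\<Sum>ys\<in>permutations_of_set (S - {x}). ?t ys J) = cdet_set emb q M (S - {x}) J"
      using Cons.IH[of "S - {x}"] Cons.prems x by simp
    ultimately show "(\<Sum>ys\<in>permutations_of_set (S - {x}). ?t (x # ys) (j # J)) =
        emb (lead_sign q x S) * M x j * cdet_set emb q M (S - {x}) J"
      by (simp flip: sum_distrib_left)
  qed
  finally show ?case by simp
qed

lemma cdet_eq_cdet_set:
  assumes sorted: "sorted_wrt (<) I" and "length J = length I"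
  shows "cdet emb q M I J = cdet_set emb q M (set I) J"
proof -
  let ?Perms = "{\<sigma>. \<sigma> permutes {..<length I}}"
  have distinct: "distinct I"
    using sorted strict_sorted_iff by blast
  have "(\<Prod>s\<leftarrow>[0..<length I]. M (I ! \<sigma> s) (J ! s)) = prod_list (map2 M (permute_list \<sigma> I) J)"
    if "\<sigma> \<in> ?Perms" for \<sigma>
    using assms(2) unfolding permute_list_def
    by (intro arg_cong[where f = prod_list] nth_equalityI) auto
  then have "cdet emb q M I J =
      (\<Sum>\<sigma>\<in>?Perms. emb (eps q (permute_list \<sigma> I)) * prod_list (map2 M (permute_list \<sigma> I) J))"
    unfolding cdet_def using eps_perm_eq_eps_permute_list[OF sorted] by (intro sum.cong) auto
  also have "\<dots> = (\<Sum>xs\<in>permutations_of_set (set I). emb (eps q xs) * prod_list (map2 M xs J))"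
    by (rule sum.reindex_bij_betw[OF bij_betw_permute_list[OF distinct]])
  also have "\<dots> = cdet_set emb q M (set I) J"
    using assms(2) distinct by (simp add: cdet_set_eq_sum_permutations distinct_card)
  finally show ?thesis .
qed

definition cdet2 :: "(nat \<Rightarrow> nat \<Rightarrow> complex) \<Rightarrow> (nat \<Rightarrow> nat \<Rightarrow> 'a) \<Rightarrow> nat \<Rightarrow> nat \<Rightarrow> nat \<Rightarrow> nat \<Rightarrow> 'a" where
  "cdet2 q M x y a b = M x a * M y b - emb (q y x) * M y a * M x b"

lemma cdet_set_Cons_Cons:
  assumes "finite S"
  shows "cdet_set emb q M S (a # b # J) =
    (\<Sum>(x, y)\<in>{(x, y)\<in>S \<times> S. x < y}.
       emb (lead_sign q x S * lead_sign q y (S - {x})) * cdet2 q M x y a b * cdet_set emb q M (S - {x} - {y}) J)"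
proof -
  define H where "H x y =
    emb (lead_sign q x S * lead_sign q y (S - {x})) * (M x a * M y b) * cdet_set emb q M (S - {x} - {y}) J"
    for x y
  have "cdet_set emb q M S (a # b # J) = (\<Sum>x\<in>S. \<Sum>y\<in>S - {x}. H x y)"
    by (simp add: H_def sum_distrib_left emb_mult_interchange_right)
  also have "\<dots> = (\<Sum>(x, y)\<in>{(x, y)\<in>S \<times> S. x < y}. H x y + H y x)"
    using assms by (rule sum_distinct_pairs_symmetrize)
  also have "\<dots> = (\<Sum>(x, y)\<in>{(x, y)\<in>S \<times> S. x < y}.
      emb (lead_sign q x S * lead_sign q y (S - {x})) * cdet2 q M x y a b * cdet_set emb q M (S - {x} - {y}) J)"
  proof (rule sum.cong[OF refl], clarify)
    fix x y assume xy: "x \<in> S" "y \<in> S" "x < y"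
    let ?c = "emb (lead_sign q x S * lead_sign q y (S - {x}))"
    have "S - {y} - {x} = S - {x} - {y}"
      by auto
    then have "H y x = emb (- q y x) * ?c * (M y a * M x b) * cdet_set emb q M (S - {x} - {y}) J"
      unfolding H_def lead_sign_pair[OF assms xy] emb_mult[of "- q y x"] by (simp add: mult.assoc)
    also have "\<dots> = ?c * (- (emb (q y x) * M y a * M x b)) * cdet_set emb q M (S - {x} - {y}) J"
      by (simp add: emb_minus emb_commute[of _ ?c] mult.assoc)
    finally show "H x y + H y x = ?c * cdet2 q M x y a b * cdet_set emb q M (S - {x} - {y}) J"
      unfolding H_def cdet2_def by (simp add: algebra_simps)
  qed
  finally show ?thesis .
qed

lemma cdet_set_snoc:
  "finite S \<Longrightarrow> card S = Suc (length J) \<Longrightarrow>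
     cdet_set emb q M S (J @ [j]) = (\<Sum>k\<in>S. emb (last_sign q k S) * cdet_set emb q M (S - {k}) J * M k j)"
proof (induction J arbitrary: S)
  case Nil
  then obtain x where "S = {x}"
    by (auto simp: card_Suc_eq)
  moreover have "lead_sign q x {x} = 1" "last_sign q x {x} = 1"
    unfolding lead_sign_def last_sign_def by (auto intro: prod.neutral)
  ultimately show ?case
    by simp
next
  case (Cons j0 J)
  define F where "F x k = emb (lead_sign q x S * last_sign q k (S - {x})) *
    (M x j0 * cdet_set emb q M (S - {x} - {k}) J) * M k j" for x k
  have "cdet_set emb q M S ((j0 # J) @ [j]) = (\<Sum>x\<in>S. \<Sum>k\<in>S - {x}. F x k)"
    using Cons by (simp add: sum_distrib_left F_def emb_mult_interchange_right cong: sum.cong)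
  also have "\<dots> = (\<Sum>k\<in>S. \<Sum>x\<in>S - {k}. F x k)"
    using Cons.prems(1) by (rule sum_swap_distinct_pairs)
  also have "\<dots> = (\<Sum>k\<in>S. emb (last_sign q k S) * cdet_set emb q M (S - {k}) (j0 # J) * M k j)"
  proof (rule sum.cong[OF refl])
    fix k assume k: "k \<in> S"
    have "S - {x} - {k} = S - {k} - {x}" for x
      by auto
    then have "F x k = emb (last_sign q k S) *
        (emb (lead_sign q x (S - {k})) * M x j0 * cdet_set emb q M (S - {k} - {x}) J) * M k j"
      if "x \<in> S - {k}" for x
      using that k Cons.prems(1) unfolding F_def by (simp add: lead_sign_last_sign_commute emb_mult mult.assoc)
    then show "(\<Sum>x\<in>S - {k}. F x k) = emb (last_sign q k S) * cdet_set emb q M (S - {k}) (j0 # J) * M k j"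
      by (simp add: sum_distrib_left sum_distrib_right)
  qed
  finally show ?case .
qed

lemma cdet_set_prefix_columns:
  assumes "\<And>S. finite S \<Longrightarrow> S \<subseteq> T \<Longrightarrow> cdet_set emb q M S A = emb c * cdet_set emb q M S B"
  shows "finite S \<Longrightarrow> S \<subseteq> T \<Longrightarrow> cdet_set emb q M S (J @ A) = emb c * cdet_set emb q M S (J @ B)"
proof (induction J arbitrary: S)
  case Nil
  then show ?case using assms by simp
next
  case (Cons j J)
  then have "cdet_set emb q M (S - {x}) (J @ A) = emb c * cdet_set emb q M (S - {x}) (J @ B)" for x
    by auto
  then show ?case
    by (simp add: sum_distrib_left emb_left_commute)
qed

end

locale manin_matrix = complex_algebra emb for emb :: "complex \<Rightarrow> 'a::ring_1" +
  fixes n :: nat and q p :: "nat \<Rightarrow> nat \<Rightarrow> complex" and M :: "nat \<Rightarrow> nat \<Rightarrow> 'a"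
  assumes manin: "manin emb n q p M"
    and param_p: "param_matrix n p"
begin

lemma p_mult_swap:
  "k \<in> {1..n} \<Longrightarrow> l \<in> {1..n} \<Longrightarrow> p l k * p k l = 1"
  using param_p unfolding param_matrix_def by auto

lemma cdet2_same_column:
  assumes "x < y" "x \<in> {1..n}" "y \<in> {1..n}" "k \<in> {1..n}"
  shows "cdet2 q M x y k k = 0"
  using manin assms unfolding manin_def cdet2_def by auto

lemma cdet2_swap_columns:
  assumes "x < y" "x \<in> {1..n}" "y \<in> {1..n}" "k \<in> {1..n}" "l \<in> {1..n}" "k < l"
  shows "cdet2 q M x y l k = emb (- p l k) * cdet2 q M x y k l"
proof -
  have "M x k * M y l - emb (q y x * p k l) * M y l * M x k
      + emb (p k l) * M x l * M y k - emb (q y x) * M y k * M x l = 0"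
    using manin assms unfolding manin_def by auto
  moreover have "emb (p k l) * cdet2 q M x y l k =
      emb (p k l) * M x l * M y k - emb (q y x * p k l) * M y l * M x k"
    unfolding cdet2_def mult.commute[of "q y x" "p k l"] emb_mult[of "p k l"]
    by (simp only: right_diff_distrib mult.assoc)
  ultimately have "cdet2 q M x y k l = - (emb (p k l) * cdet2 q M x y l k)"
    unfolding cdet2_def by (simp add: algebra_simps)
  then have "emb (- p l k) * cdet2 q M x y k l = emb (p l k * p k l) * cdet2 q M x y l k"
    by (simp add: emb_minus emb_mult mult.assoc)
  then show ?thesis
    using p_mult_swap assms by simp
qed

lemma cdet_set_swap_first_columns:
  assumes S: "S \<subseteq> {1..n}" and "k \<in> {1..n}" "l \<in> {1..n}" "k < l"
  shows "cdet_set emb q M S (l # k # J) = emb (- p l k) * cdet_set emb q M S (k # l # J)"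
proof -
  have fin: "finite S"
    using S finite_subset by blast
  have "emb c * cdet2 q M x y l k * R = emb (- p l k) * (emb c * cdet2 q M x y k l * R)"
    if "x \<in> S" "y \<in> S" "x < y" for x y c R
  proof -
    have "cdet2 q M x y l k = emb (- p l k) * cdet2 q M x y k l"
      using that assms by (intro cdet2_swap_columns) auto
    then show ?thesis
      by (metis emb_left_commute mult.assoc)
  qed
  then show ?thesis
    unfolding cdet_set_Cons_Cons[OF fin] sum_distrib_left by (intro sum.cong) auto
qed

lemma cdet_set_equal_first_columns:
  assumes S: "S \<subseteq> {1..n}" and "k \<in> {1..n}"
  shows "cdet_set emb q M S (k # k # J) = 0"
proof -
  have "cdet2 q M x y k k = 0" if "x \<in> S" "y \<in> S" "x < y" for x y
    using that assms by (intro cdet2_same_column) auto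
  then show ?thesis
    unfolding cdet_set_Cons_Cons[OF finite_subset[OF S finite_atLeastAtMost]] by (intro sum.neutral) auto
qed

lemma cdet_set_swap_adjacent_columns:
  assumes S: "S \<subseteq> {1..n}" and "k \<in> {1..n}" "l \<in> {1..n}" "k \<noteq> l"
  shows "cdet_set emb q M S (J' @ l # k # J) = emb (- p l k) * cdet_set emb q M S (J' @ k # l # J)"
proof -
  have swap: "cdet_set emb q M S (J' @ l # k # J) = emb (- p l k) * cdet_set emb q M S (J' @ k # l # J)"
    if "k \<in> {1..n}" "l \<in> {1..n}" "k < l" for k l
    using S cdet_set_swap_first_columns[OF _ that]
    by (intro cdet_set_prefix_columns[where T = "{1..n}"]) (auto intro: finite_subset)
  show ?thesis
  proof (cases "k < l")
    case True
    then show ?thesis using swap assms by blast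
  next
    case False
    then have "cdet_set emb q M S (J' @ k # l # J) = emb (- p k l) * cdet_set emb q M S (J' @ l # k # J)"
      using swap assms by simp
    moreover have "emb (- p l k) * emb (- p k l) = 1"
      using p_mult_swap assms by (simp flip: emb_mult)
    ultimately show ?thesis
      by (simp flip: mult.assoc)
  qed
qed

lemma cdet_set_equal_adjacent_columns:
  assumes "S \<subseteq> {1..n}" "k \<in> {1..n}"
  shows "cdet_set emb q M S (J' @ k # k # J) = 0"
proof -
  have "cdet_set emb q M S (J' @ k # k # J) = emb 0 * cdet_set emb q M S (J' @ k # k # J)"
    using assms cdet_set_equal_first_columns
    by (intro cdet_set_prefix_columns[where T = "{1..n}"]) (auto intro: finite_subset)
  then show ?thesis
    by simp
qed

lemma cdet_set_move_column:
  assumes "S \<subseteq> {1..n}" "x \<in> {1..n}" "set B \<subseteq> {1..n}" "x \<notin> set B"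
  shows "cdet_set emb q M S (A @ x # B @ C) =
    emb (\<Prod>b\<leftarrow>B. - p x b) * cdet_set emb q M S (A @ B @ x # C)"
  using assms(3,4)
proof (induction B arbitrary: A)
  case Nil
  then show ?case by simp
next
  case (Cons b B)
  have "cdet_set emb q M S (A @ x # b # B @ C) = emb (- p x b) * cdet_set emb q M S ((A @ [b]) @ x # B @ C)"
    using assms Cons.prems cdet_set_swap_adjacent_columns[of S b x A "B @ C"] by auto
  also have "\<dots> = emb (- p x b) * (emb (\<Prod>b\<leftarrow>B. - p x b) * cdet_set emb q M S ((A @ [b]) @ B @ x # C))"
    using Cons.IH[of "A @ [b]"] Cons.prems by simp
  finally show ?case
    by (simp flip: mult.assoc emb_mult)
qed

lemma cdet_set_repeated_column:
  assumes "S \<subseteq> {1..n}" "set A \<subseteq> {1..n}" "j \<in> set A"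
  shows "cdet_set emb q M S (A @ [j]) = 0"
proof -
  obtain A1 A2 where A: "A = A1 @ j # A2" "j \<notin> set A2"
    using split_list_last[OF assms(3)] by blast
  then have "cdet_set emb q M S (A @ [j]) =
      emb (\<Prod>b\<leftarrow>A2. - p j b) * cdet_set emb q M S ((A1 @ A2) @ j # j # [])"
    using assms cdet_set_move_column[of S j A2 A1 "[j]"] by auto
  also have "\<dots> = 0"
    using assms A cdet_set_equal_adjacent_columns[of S j "A1 @ A2" "[]"] by auto
  finally show ?thesis .
qed

lemma cdet_set_compl_idx_snoc_self:
  assumes i: "i \<in> {1..n}"
  shows "cdet_set emb q M {1..n} (compl_idx n i @ [i]) =
    emb (last_sign p i {1..n}) * cdet_set emb q M {1..n} [1..<Suc n]"
proof -
  let ?B = "[Suc i..<Suc n]"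
  have "cdet_set emb q M {1..n} [1..<Suc n] = cdet_set emb q M {1..n} ([1..<i] @ i # ?B @ [])"
    using upt_split_at[OF i] by simp
  also have "\<dots> = emb (\<Prod>b\<leftarrow>?B. - p i b) * cdet_set emb q M {1..n} ([1..<i] @ ?B @ [i])"
    by (rule cdet_set_move_column) (use i in auto)
  also have "[1..<i] @ ?B @ [i] = compl_idx n i @ [i]"
    using compl_idx_eq_append[OF i] by simp
  finally have move: "cdet_set emb q M {1..n} [1..<Suc n] =
      emb (\<Prod>b\<leftarrow>?B. - p i b) * cdet_set emb q M {1..n} (compl_idx n i @ [i])" .
  have "set ?B = {z\<in>{1..n}. i < z}"
    using i by auto
  then have "(\<Prod>b\<leftarrow>?B. - p i b) = (\<Prod>b\<in>{z\<in>{1..n}. i < z}. - p i b)"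
    using prod.distinct_set_conv_list[of ?B "\<lambda>b. - p i b"] by (simp del: upt_Suc)
  then have "last_sign p i {1..n} * (\<Prod>b\<leftarrow>?B. - p i b) = (\<Prod>b\<in>{z\<in>{1..n}. i < z}. p b i * p i b)"
    unfolding last_sign_def by (simp flip: prod.distrib)
  also have "\<dots> = 1"
    using i p_mult_swap by (intro prod.neutral) auto
  finally have "emb (last_sign p i {1..n}) * emb (\<Prod>b\<leftarrow>?B. - p i b) = 1"
    by (simp flip: emb_mult)
  then show ?thesis
    unfolding move by (simp flip: mult.assoc)
qed

definition adjugate :: "nat \<Rightarrow> nat \<Rightarrow> 'a" where
  "adjugate i k = emb (inverse (last_sign p i {1..n}) * last_sign q k {1..n}) *
     cdet_set emb q M ({1..n} - {k}) (compl_idx n i)"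

lemma adjugate_mult:
  assumes i: "i \<in> {1..n}" and j: "j \<in> {1..n}"
  shows "(\<Sum>k=1..n. adjugate i k * M k j) = (if i = j then cdet_set emb q M {1..n} [1..<Suc n] else 0)"
proof -
  have "(\<Sum>k=1..n. adjugate i k * M k j) = emb (inverse (last_sign p i {1..n})) *
      (\<Sum>k=1..n. emb (last_sign q k {1..n}) * cdet_set emb q M ({1..n} - {k}) (compl_idx n i) * M k j)"
    unfolding adjugate_def by (simp add: sum_distrib_left emb_mult mult.assoc)
  also have "\<dots> = emb (inverse (last_sign p i {1..n})) * cdet_set emb q M {1..n} (compl_idx n i @ [j])"
    using i length_compl_idx[OF i] by (simp add: cdet_set_snoc)
  also have "\<dots> = (if i = j then cdet_set emb q M {1..n} [1..<Suc n] else 0)"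
  proof (cases "i = j")
    case True
    have "last_sign p i {1..n} \<noteq> 0"
      using i param_p unfolding last_sign_def param_matrix_def by auto
    then show ?thesis
      unfolding True[symmetric] cdet_set_compl_idx_snoc_self[OF i] mult.assoc[symmetric]
      by (simp add: emb_inverse_mult del: upt_Suc)
  next
    case False
    then show ?thesis
      using i j by (simp add: cdet_set_repeated_column set_compl_idx)
  qed
  finally show ?thesis .
qed

end

theorem mainTheorem4:
  fixes emb :: "complex \<Rightarrow> 'a::ring_1"
    and n :: nat
    and q p :: "nat \<Rightarrow> nat \<Rightarrow> complex"
    and M N :: "nat \<Rightarrow> nat \<Rightarrow> 'a"
    and d :: 'a
  assumes "complex_algebra_map emb"
    and "param_matrix n q" and "param_matrix n p"
    and "manin emb n q p M"
    and "inverse_mat n M N"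
    and "d * cdet emb q M [1..<Suc n] [1..<Suc n] = 1"
    and "cdet emb q M [1..<Suc n] [1..<Suc n] * d = 1"
    and "i \<in> {1..n}" and "j \<in> {1..n}"
  shows "N i j = emb (inverse (eps p (compl_idx n i @ [i])) * eps q (compl_idx n j @ [j]))
                 * d * cdet emb q M (compl_idx n j) (compl_idx n i)"
proof -
  interpret manin_matrix emb n q p M
    using assms(1,3,4) by unfold_locales
  have "d * cdet_set emb q M {1..n} [1..<Suc n] = 1"
    using assms(6) by (simp add: cdet_eq_cdet_set atLeastLessThanSuc_atLeastAtMost del: upt_Suc)
  moreover have "(\<Sum>l=1..n. M k l * N l m) = (if k = m then 1 else 0)"
    if "k \<in> {1..n}" "m \<in> {1..n}" for k m
    using assms(5) that unfolding inverse_mat_def by blast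
  ultimately have "N i j = d * adjugate i j"
    using right_inverse_eq_scaled_left_adjugate[OF finite_atLeastAtMost adjugate_mult] assms(8,9) by blast
  moreover have "cdet_set emb q M ({1..n} - {j}) (compl_idx n i) = cdet emb q M (compl_idx n j) (compl_idx n i)"
    using assms(8,9) by (simp add: cdet_eq_cdet_set sorted_compl_idx length_compl_idx set_compl_idx)
  ultimately have "N i j = emb (inverse (last_sign p i {1..n}) * last_sign q j {1..n}) * d *
      cdet emb q M (compl_idx n j) (compl_idx n i)"
    unfolding adjugate_def by (simp add: emb_commute mult.assoc)
  then show ?thesis
    by (simp add: eps_compl_idx_snoc)
qed

end
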